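(* Let $R$ be a tolerance relation on $\{1,\ldots,n\}$ and $T(b)=\sum_{(i,j)\in R}E_{ii}bE_{jj}$ for $b\in M_n(\mathbb{C})$. If $\rho\in M_n(\mathbb{C})$ is a density matrix, $v\in\mathbb{C}^n$ is an $R$-tolerant unit vector, and $T(\rho)=T(P_v)$, then $\rho=P_v$.
   Context: A tolerance relation is a reflexive and symmetric relation; its graph has an edge between $i\neq j$ whenever $(i,j)\in R$. $E_{ij}$ are the matrix units, so $T$ sets to zero all entries in positions $(i,j)\notin R$. A density matrix is a positive semidefinite matrix with trace $1$. For a unit vector $v$, $P_v=(v_i\overline{v_j})_{i,j}$. For non-zero $v$, $R_v:=\{(i,j)\in R:v_iv_j\ne0\}$, a tolerance relation on $\{i:v_i\ne0\}$; $v$ is $R$-tolerant if the graph of $R_v$ is connected. *)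

theory Defs
  imports "HOL-Analysis.Analysis"
begin

text \<open>Complex n x n matrices are modelled as complex^'n^'n, with 'n a finite index type
  standing for {1,...,n}; vectors in C^n as complex^'n.\<close>

definition tolerance_rel :: "('n \<times> 'n) set \<Rightarrow> bool" where
  "tolerance_rel R \<longleftrightarrow> (\<forall>i. (i, i) \<in> R) \<and> sym R"

definition mat_unit :: "'n::finite \<Rightarrow> 'n \<Rightarrow> complex^'n^'n" ("E") where
  "mat_unit i j = (\<chi> k l. if k = i \<and> l = j then 1 else 0)"

definition Tmap :: "('n::finite \<times> 'n) set \<Rightarrow> complex^'n^'n \<Rightarrow> complex^'n^'n" where
  "Tmap R b = (\<Sum>(i, j)\<in>R. E i i ** b ** E j j)"

definition mtrace :: "complex^'n^'n \<Rightarrow> complex" where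
  "mtrace A = (\<Sum>i\<in>UNIV. A $ i $ i)"

definition psd :: "complex^'n^'n \<Rightarrow> bool" where
  "psd A \<longleftrightarrow> (\<forall>x::complex^'n.
     let q = (\<Sum>i\<in>UNIV. \<Sum>j\<in>UNIV. cnj (x $ i) * A $ i $ j * x $ j) in Im q = 0 \<and> Re q \<ge> 0)"

definition density_matrix :: "complex^'n^'n \<Rightarrow> bool" where
  "density_matrix A \<longleftrightarrow> psd A \<and> mtrace A = 1"

definition proj_vec :: "complex^'n \<Rightarrow> complex^'n^'n" ("P") where
  "proj_vec v = (\<chi> i j. v $ i * cnj (v $ j))"

definition Rv :: "('n \<times> 'n) set \<Rightarrow> complex^'n \<Rightarrow> ('n \<times> 'n) set" where
  "Rv R v = {(i, j) \<in> R. v $ i \<noteq> 0 \<and> v $ j \<noteq> 0}"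

definition R_tolerant :: "('n \<times> 'n) set \<Rightarrow> complex^'n \<Rightarrow> bool" where
  "R_tolerant R v \<longleftrightarrow> v \<noteq> 0 \<and>
     (\<forall>i j. v $ i \<noteq> 0 \<longrightarrow> v $ j \<noteq> 0 \<longrightarrow> (i, j) \<in> (Rv R v)\<^sup>*)"

end

(* A positive semidefinite matrix A annihilates every vector y with y* A y = 0, from both sides.
   For an edge (k, l) of R inside the support of v, the vector y = conj(v_l) e_k - conj(v_k) e_l
   is orthogonal to v and lives on the 2x2 block {k, l}, where rho agrees with P_v; hence
   y* rho y = 0 and rho y = 0, i.e. the columns k and l of rho are proportional exactly as those
   of P_v are. Connectedness of the support spreads this proportionality to all of it, the
   diagonal fixes the constant, and outside the support the vanishing diagonal entries kill the
   corresponding rows and columns. *)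

theory Submission
  imports Defs
begin

definition sesq_form :: "complex^'n^'n \<Rightarrow> complex^'n \<Rightarrow> complex^'n \<Rightarrow> complex" where
  "sesq_form A x y = (\<Sum>i\<in>UNIV. \<Sum>j\<in>UNIV. cnj (x $ i) * A $ i $ j * y $ j)"

lemma psd_iff_sesq_form:
  "psd A \<longleftrightarrow> (\<forall>x. Im (sesq_form A x x) = 0 \<and> 0 \<le> Re (sesq_form A x x))"
  by (simp add: psd_def sesq_form_def Let_def)

lemma sesq_form_add_left: "sesq_form A (x + y) z = sesq_form A x z + sesq_form A y z"
  by (simp add: sesq_form_def algebra_simps sum.distrib)

lemma sesq_form_add_right: "sesq_form A x (y + z) = sesq_form A x y + sesq_form A x z"
  by (simp add: sesq_form_def algebra_simps sum.distrib)

lemma sesq_form_scale_left: "sesq_form A (c *s x) y = cnj c * sesq_form A x y"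
  by (simp add: sesq_form_def sum_distrib_left algebra_simps)

lemma sesq_form_scale_right: "sesq_form A x (c *s y) = c * sesq_form A x y"
  by (simp add: sesq_form_def sum_distrib_left algebra_simps)

lemma sesq_form_axis_left: "sesq_form A (axis i 1) y = (A *v y) $ i"
  unfolding sesq_form_def mult.assoc sum_distrib_left[symmetric]
  by (simp add: axis_def matrix_vector_mult_def if_distrib[where f=cnj]
      if_distrib[where f="\<lambda>x. x * c" for c] cong: if_cong)

lemma sesq_form_axis_axis: "sesq_form A (axis i 1) (axis j 1) = A $ i $ j"
  unfolding sesq_form_axis_left
  by (simp add: matrix_vector_mult_def axis_def if_distrib[where f="\<lambda>x. c * x" for c] cong: if_cong)

lemma quadratic_nonneg_imp_linear_coeff_eq_0:
  fixes a c :: real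
  assumes nonneg: "\<And>t. 0 \<le> a * t + c * t\<^sup>2"
  shows "a = 0"
proof (rule ccontr)
  assume "a \<noteq> 0"
  define d where "d = \<bar>c\<bar> + 1"
  define t where "t = - a / (2 * d)"
  have "d > 0" by (simp add: d_def add_nonneg_pos)
  have "a * t + c * t\<^sup>2 \<le> a * t + d * t\<^sup>2"
    by (simp add: d_def mult_right_mono)
  also have "\<dots> = - a\<^sup>2 / (4 * d)"
    using \<open>d > 0\<close> by (simp add: t_def field_simps power2_eq_square)
  also have "\<dots> < 0"
    using \<open>d > 0\<close> \<open>a \<noteq> 0\<close> by simp
  finally show False using nonneg[of t] by simp
qed

lemma psd_sesq_form_add_eq_0:
  assumes "psd A" and "sesq_form A y y = 0"
  shows "sesq_form A y w + sesq_form A w y = 0"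
proof -
  define s where "s = sesq_form A y w + sesq_form A w y"
  define q where "q = sesq_form A w w"
  have expand: "sesq_form A (y + of_real t *s w) (y + of_real t *s w) = of_real t * s + of_real (t\<^sup>2) * q"
    for t
    using assms(2)
    by (simp add: sesq_form_add_left sesq_form_add_right sesq_form_scale_left sesq_form_scale_right
        s_def q_def algebra_simps power2_eq_square)
  have psd: "Im (sesq_form A x x) = 0" "0 \<le> Re (sesq_form A x x)" for x
    using assms(1) by (auto simp: psd_iff_sesq_form)
  have "Im s = 0"
    using psd(1)[of "y + of_real 1 *s w"] psd(1)[of w] expand[of 1] by (simp add: q_def)
  moreover have "Re s = 0"
  proof (rule quadratic_nonneg_imp_linear_coeff_eq_0)
    show "0 \<le> Re s * t + Re q * t\<^sup>2" for t
      using psd(2)[of "y + of_real t *s w"] by (simp add: expand mult.commute)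
  qed
  ultimately show ?thesis by (simp add: s_def complex_eq_iff)
qed

lemma psd_sesq_form_eq_0:
  assumes "psd A" and "sesq_form A y y = 0"
  shows "sesq_form A y z = 0" and "sesq_form A z y = 0"
proof -
  have "sesq_form A y z + sesq_form A z y = 0"
    using psd_sesq_form_add_eq_0[OF assms] .
  moreover have "\<i> * sesq_form A y z - \<i> * sesq_form A z y = 0"
    using psd_sesq_form_add_eq_0[OF assms, of "\<i> *s z"]
    by (simp add: sesq_form_scale_left sesq_form_scale_right)
  ultimately show "sesq_form A y z = 0" and "sesq_form A z y = 0"
    by (auto simp: algebra_simps)
qed

lemma psd_mult_vec_eq_0:
  assumes "psd A" and "sesq_form A y y = 0"
  shows "A *v y = 0"
  using psd_sesq_form_eq_0(2)[OF assms] by (simp add: vec_eq_iff flip: sesq_form_axis_left)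

lemma psd_diag_eq_0:
  assumes "psd A" and "A $ k $ k = 0"
  shows "A $ k $ m = 0" and "A $ m $ k = 0"
  using psd_sesq_form_eq_0[OF assms(1), of "axis k 1" "axis m 1"] assms(2)
  by (simp_all add: sesq_form_axis_axis)

lemma psd_columns_proportional_if_agree_proj_vec:
  assumes "psd A"
    and agree: "\<And>i j. i \<in> {k, l} \<Longrightarrow> j \<in> {k, l} \<Longrightarrow> A $ i $ j = v $ i * cnj (v $ j)"
  shows "A $ m $ k * cnj (v $ l) = A $ m $ l * cnj (v $ k)"
proof -
  define y where "y = cnj (v $ l) *s axis k 1 + (- cnj (v $ k)) *s axis l 1"
  \<comment> \<open>y is orthogonal to v, so y* (v v*) y = 0, and only the block {k, l} enters.\<close>
  have "sesq_form A y y = 0"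
    unfolding y_def sesq_form_add_left sesq_form_add_right sesq_form_scale_left
      sesq_form_scale_right sesq_form_axis_axis
    by (simp add: agree algebra_simps)
  then have "(A *v y) $ m = 0"
    using psd_mult_vec_eq_0[OF assms(1)] by simp
  then show ?thesis
    by (simp add: y_def matrix_vector_mult_def axis_def sum_subtractf algebra_simps
        if_distrib[where f="\<lambda>x. c * x" for c] cong: if_cong)
qed

lemma psd_columns_proportional_along_path:
  assumes "tolerance_rel R" and "psd A"
    and agree: "\<And>i j. (i, j) \<in> R \<Longrightarrow> A $ i $ j = v $ i * cnj (v $ j)"
    and "(k, l) \<in> (Rv R v)\<^sup>*"
  shows "A $ m $ k * cnj (v $ l) = A $ m $ l * cnj (v $ k)"
  using assms(4)
proof (induction rule: rtrancl_induct)
  case base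
  show ?case by simp
next
  case (step j l)
  then have "(j, l) \<in> R" and "v $ j \<noteq> 0"
    by (auto simp: Rv_def)
  with assms(1) have "\<And>a b. a \<in> {j, l} \<Longrightarrow> b \<in> {j, l} \<Longrightarrow> (a, b) \<in> R"
    by (auto simp: tolerance_rel_def dest: symD)
  then have edge: "A $ m $ j * cnj (v $ l) = A $ m $ l * cnj (v $ j)"
    by (intro psd_columns_proportional_if_agree_proj_vec[OF assms(2)] agree)
  have "A $ m $ k * cnj (v $ l) * cnj (v $ j) = A $ m $ k * cnj (v $ j) * cnj (v $ l)"
    by (simp add: ac_simps)
  also have "\<dots> = A $ m $ j * cnj (v $ l) * cnj (v $ k)"
    using step.IH by (simp add: ac_simps)
  also have "\<dots> = A $ m $ l * cnj (v $ k) * cnj (v $ j)"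
    using edge by (simp add: ac_simps)
  finally show ?case
    using \<open>v $ j \<noteq> 0\<close> by simp
qed

lemma psd_eq_proj_vec_if_agree_on_tolerance:
  assumes "tolerance_rel R" and "psd A"
    and agree: "\<And>i j. (i, j) \<in> R \<Longrightarrow> A $ i $ j = v $ i * cnj (v $ j)"
    and "R_tolerant R v"
  shows "A = P v"
proof -
  have diag: "A $ i $ i = v $ i * cnj (v $ i)" for i
    using assms(1) by (intro agree) (simp add: tolerance_rel_def)
  have "A $ m $ l = v $ m * cnj (v $ l)" for m l
  proof (cases "v $ m = 0 \<or> v $ l = 0")
    case True
    then show ?thesis
    proof
      assume "v $ m = 0"
      then show ?thesis using psd_diag_eq_0(1)[OF assms(2)] diag[of m] by simp
    next
      assume "v $ l = 0"
      then show ?thesis using psd_diag_eq_0(2)[OF assms(2)] diag[of l] by simp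
    qed
  next
    case False
    then have "(l, m) \<in> (Rv R v)\<^sup>*"
      using assms(4) by (auto simp: R_tolerant_def)
    then have "A $ m $ l * cnj (v $ m) = A $ m $ m * cnj (v $ l)"
      using psd_columns_proportional_along_path[OF assms(1,2), of v l m m] agree by blast
    also have "\<dots> = v $ m * cnj (v $ l) * cnj (v $ m)"
      by (simp add: diag)
    finally show ?thesis
      using False by simp
  qed
  then show ?thesis
    by (simp add: vec_eq_iff proj_vec_def)
qed

lemma mat_unit_mult_mult_mat_unit:
  "(E i i ** b ** E j j) $ k $ l = (if (k, l) = (i, j) then b $ k $ l else 0)"
  by (auto simp: matrix_matrix_mult_def mat_unit_def if_distrib[where f="\<lambda>x. x * c" for c]
      if_distrib[where f="\<lambda>x. c * x" for c] cong: if_cong)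

lemma Tmap_entry: "Tmap R b $ k $ l = (if (k, l) \<in> R then b $ k $ l else 0)"
proof -
  have "Tmap R b $ k $ l = (\<Sum>p\<in>R. if (k, l) = p then b $ k $ l else 0)"
    by (simp add: Tmap_def case_prod_beta mat_unit_mult_mult_mat_unit)
  also have "\<dots> = (if (k, l) \<in> R then b $ k $ l else 0)"
    by (simp add: sum.delta)
  finally show ?thesis .
qed

theorem lemma4p13:
  fixes R :: "('n::finite \<times> 'n) set" and \<rho> :: "complex^'n^'n" and v :: "complex^'n"
  assumes "tolerance_rel R"
    and "density_matrix \<rho>"
    and "norm v = 1"
    and "R_tolerant R v"
    and "Tmap R \<rho> = Tmap R (P v)"
  shows "\<rho> = P v"
proof (rule psd_eq_proj_vec_if_agree_on_tolerance[OF assms(1) _ _ assms(4)])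
  show "psd \<rho>"
    using assms(2) by (simp add: density_matrix_def)
  show "\<rho> $ i $ j = v $ i * cnj (v $ j)" if "(i, j) \<in> R" for i j
    using arg_cong[OF assms(5), of "\<lambda>M. M $ i $ j"] that by (simp add: Tmap_entry proj_vec_def)
qed

end
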